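(* Let $\beta_\bullet\in\{\beta,\beta_v\}$ and let $N$ be $\to_{\beta_\bullet}$-normal. For every term $M$: $M\to_{\beta_\bullet}^*N$ if and only if $M\rightsquigarrow_{pd}^*N$.
   Context: Terms $\Lambda_{\mathcal O}$: $M::=x\mid\lambda x.M\mid MM\mid\mathsf{op}(M,\dots,M)$ with $\mathsf{op}$ in a (possibly empty) set $\mathcal O$ of operator symbols with fixed arities; values $V::=x\mid\lambda x.M$. Rules $(\lambda x.M)N\mapsto_\beta M\{N/x\}$, $(\lambda x.M)V\mapsto_{\beta_v}M\{V/x\}$; $\to=\to_{\beta_\bullet}$ is the closure under all contexts (including under $\lambda$ and operators). Surface reduction $\to_s$: for $\beta$, closure of $\beta$ under head contexts $H::=[\,]\mid\lambda x.H\mid HM$; for $\beta_v$, closure of $\beta_v$ under weak contexts $W::=[\,]\mid WM\mid MW$. Parallel reduction $\rightsquigarrow_{pd}$: (1) if $M\to_sM'$ then $M\rightsquigarrow_{pd}M'$; (2) if $M$ is $\to$-normal then $M\rightsquigarrow_{pd}M$; (3) otherwise (M is $\to_s$-normal but not $\to$-normal): $\lambda x.P\rightsquigarrow_{pd}\lambda x.P'$ if $P\rightsquigarrow_{pd}P'$; $P_1P_2\rightsquigarrow_{pd}P_1'P_2'$ if $P_1\rightsquigarrow_{pd}P_1'$ and $P_2\rightsquigarrow_{pd}P_2'$; $\mathsf{op}(P_1,\dots,P_k)\rightsquigarrow_{pd}\mathsf{op}(P_1',\dots,P_k')$ if $P_i\rightsquigarrow_{pd}P_i'$ for all $i$. 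*)

theory Defs
  imports Main
begin

datatype 'o trm = Var nat | Lam "'o trm" | App "'o trm" "'o trm" | Op 'o "'o trm list"

primrec lift :: "nat \<Rightarrow> 'o trm \<Rightarrow> 'o trm" where
  "lift k (Var i) = (if i < k then Var i else Var (Suc i))"
| "lift k (Lam t) = Lam (lift (Suc k) t)"
| "lift k (App t u) = App (lift k t) (lift k u)"
| "lift k (Op f ts) = Op f (map (lift k) ts)"

text \<open>subst t k s: capture-avoiding substitution of s for index k in t (indices above k decremented).\<close>
primrec subst :: "'o trm \<Rightarrow> nat \<Rightarrow> 'o trm \<Rightarrow> 'o trm" where
  "subst (Var i) k s = (if k < i then Var (i - 1) else if i = k then s else Var i)"
| "subst (Lam t) k s = Lam (subst t (Suc k) (lift 0 s))"
| "subst (App t u) k s = App (subst t k s) (subst u k s)"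
| "subst (Op f ts) k s = Op f (map (\<lambda>t. subst t k s) ts)"

fun is_value :: "'o trm \<Rightarrow> bool" where
  "is_value (Var _) = True"
| "is_value (Lam _) = True"
| "is_value _ = False"

datatype calculus = Beta | BetaV

inductive root :: "calculus \<Rightarrow> 'o trm \<Rightarrow> 'o trm \<Rightarrow> bool" where
  beta: "root Beta (App (Lam M) N) (subst M 0 N)"
| betav: "is_value V \<Longrightarrow> root BetaV (App (Lam M) V) (subst M 0 V)"

inductive step :: "calculus \<Rightarrow> 'o trm \<Rightarrow> 'o trm \<Rightarrow> bool" where
  st_root: "root b M M' \<Longrightarrow> step b M M'"
| st_lam: "step b M M' \<Longrightarrow> step b (Lam M) (Lam M')"
| st_appl: "step b M M' \<Longrightarrow> step b (App M N) (App M' N)"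
| st_appr: "step b N N' \<Longrightarrow> step b (App M N) (App M N')"
| st_op: "step b M M' \<Longrightarrow> step b (Op f (xs @ M # ys)) (Op f (xs @ M' # ys))"

text \<open>Surface reduction: head contexts for beta, weak contexts for beta_v.\<close>
inductive surf :: "calculus \<Rightarrow> 'o trm \<Rightarrow> 'o trm \<Rightarrow> bool" where
  s_root: "root b M M' \<Longrightarrow> surf b M M'"
| s_lam: "surf Beta M M' \<Longrightarrow> surf Beta (Lam M) (Lam M')"
| s_appl: "surf b M M' \<Longrightarrow> surf b (App M N) (App M' N)"
| s_appr: "surf BetaV N N' \<Longrightarrow> surf BetaV (App M N) (App M N')"

definition normal :: "calculus \<Rightarrow> 'o trm \<Rightarrow> bool" where
  "normal b M \<longleftrightarrow> (\<nexists>M'. step b M M')"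

definition surf_normal :: "calculus \<Rightarrow> 'o trm \<Rightarrow> bool" where
  "surf_normal b M \<longleftrightarrow> (\<nexists>M'. surf b M M')"

inductive pd :: "calculus \<Rightarrow> 'o trm \<Rightarrow> 'o trm \<Rightarrow> bool" where
  pd_surf: "surf b M M' \<Longrightarrow> pd b M M'"
| pd_nf: "normal b M \<Longrightarrow> pd b M M"
| pd_lam: "surf_normal b (Lam P) \<Longrightarrow> \<not> normal b (Lam P) \<Longrightarrow> pd b P P'
           \<Longrightarrow> pd b (Lam P) (Lam P')"
| pd_app: "surf_normal b (App P1 P2) \<Longrightarrow> \<not> normal b (App P1 P2) \<Longrightarrow> pd b P1 P1'
           \<Longrightarrow> pd b P2 P2' \<Longrightarrow> pd b (App P1 P2) (App P1' P2')"
| pd_op: "surf_normal b (Op f Ps) \<Longrightarrow> \<not> normal b (Op f Ps) \<Longrightarrow> list_all2 (pd b) Ps Ps'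
           \<Longrightarrow> pd b (Op f Ps) (Op f Ps')"

end

theory Submission
  imports Defs
begin

text \<open>Takahashi's method. A parallel step factors into surface steps followed by one internal
  parallel step (one that contracts no surface redex), and an internal parallel step followed by a
  surface step is again a parallel step. Hence internal steps can be postponed, and every
  reduction \<open>M \<rightarrow>\<^sup>* N\<close> factors into surface steps \<open>M \<rightarrow>\<^sub>s\<^sup>* L\<close> followed by internal
  parallel steps from \<open>L\<close> to \<open>N\<close>.

  If \<open>N\<close> is normal, then \<open>L\<close> is surface normal, because internal parallel steps reflect surface
  redexes, and \<open>L\<close> has the outermost constructor of \<open>N\<close>, its immediate subterms reducing to
  those of \<open>N\<close>. By induction on \<open>N\<close> these subterms reach their normal forms by \<open>pd\<close>-steps.
  Surface normality is preserved by reduction and a normal subterm can idle, so the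
  \<open>pd\<close>-reductions of the subterms combine into \<open>pd\<close>-steps of \<open>L\<close>. Conversely every \<open>pd\<close>-step
  is a reduction.\<close>

lemma rtranclp_map:
  assumes "R\<^sup>*\<^sup>* x y" and "\<And>x y. R x y \<Longrightarrow> S (f x) (f y)"
  shows "S\<^sup>*\<^sup>* (f x) (f y)"
  using assms(1) by induction (auto intro: rtranclp.rtrancl_into_rtrancl assms(2))

lemma relpowp_pad:
  assumes "(R ^^ k) x y" and "R y y" and "k \<le> n"
  shows "(R ^^ n) x y"
proof -
  have "(R ^^ m) y y" for m
    by (induction m) (auto intro: relpowp_Suc_I assms(2))
  with assms(1) have "(R ^^ (k + (n - k))) x y"
    unfolding relpowp_add by blast
  with assms(3) show ?thesis by simp
qed

lemma rtranclp_eventually_relpowp: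
  "R\<^sup>*\<^sup>* x y \<Longrightarrow> R y y \<Longrightarrow> \<forall>\<^sub>F n in sequentially. (R ^^ n) x y"
  by (auto simp: rtranclp_power eventually_sequentially intro: relpowp_pad)

lemma eventually_list_all2:
  "list_all2 (\<lambda>x y. \<forall>\<^sub>F n in F. P n x y) xs ys \<Longrightarrow> \<forall>\<^sub>F n in F. list_all2 (P n) xs ys"
  by (induction rule: list_all2_induct) (auto intro: eventually_mono [OF eventually_conj])

lemma relpowp_map_invariant:
  assumes "(R ^^ n) x y" and "I x" and "\<And>x y. R x y \<Longrightarrow> I x \<Longrightarrow> S (f x) (f y) \<and> I y"
  shows "(S ^^ n) (f x) (f y)"
  using assms(1,2)
proof (induction n arbitrary: x)
  case (Suc n)
  then obtain z where "R x z" and "(R ^^ n) z y"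
    by (blast dest: relpowp_Suc_D2)
  with Suc.prems(2) Suc.IH assms(3) show ?case
    by (blast intro: relpowp_Suc_I2)
qed simp

lemma relpowp_rel_prod:
  fixes R :: "'a \<Rightarrow> 'a \<Rightarrow> bool" and S :: "'b \<Rightarrow> 'b \<Rightarrow> bool"
  shows "(R ^^ n) a a' \<Longrightarrow> (S ^^ n) c c' \<Longrightarrow> (rel_prod R S ^^ n) (a, c) (a', c')"
proof (induction n arbitrary: a c)
  case (Suc n)
  then obtain a1 c1 where "R a a1" "(R ^^ n) a1 a'" and "S c c1" "(S ^^ n) c1 c'"
    by (blast dest: relpowp_Suc_D2)
  then have "rel_prod R S (a, c) (a1, c1)" and "(rel_prod R S ^^ n) (a1, c1) (a', c')"
    using Suc.IH by simp_all
  then show ?case by (rule relpowp_Suc_I2)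
qed simp

lemma list_all2_relpowp:
  fixes R :: "'a \<Rightarrow> 'a \<Rightarrow> bool"
  shows "list_all2 (R ^^ n) xs ys \<Longrightarrow> (list_all2 R ^^ n) xs ys"
proof (induction rule: list_all2_induct)
  case Nil
  show ?case by (induction n) auto
next
  case (Cons x xs y ys)
  have "(rel_prod R (list_all2 R) ^^ n) (x, xs) (y, ys)"
    using Cons.hyps(1) Cons.IH by (rule relpowp_rel_prod)
  then have "(list_all2 R ^^ n) (case_prod Cons (x, xs)) (case_prod Cons (y, ys))"
    by (rule relpowp_map_invariant [where I = "\<lambda>_. True"]) auto
  then show ?case by simp
qed

section \<open>De Bruijn substitution\<close>

lemma lift_lift: "i \<le> k \<Longrightarrow> lift (Suc k) (lift i t) = lift i (lift k t)"
  by (induction t arbitrary: i k) auto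

lemma lift_subst [simp]: "j \<le> i \<Longrightarrow> lift i (subst t j s) = subst (lift (Suc i) t) j (lift i s)"
  by (induction t arbitrary: i j s) (auto simp: lift_lift)

lemma lift_subst_lt: "i \<le> j \<Longrightarrow> lift i (subst t j s) = subst (lift i t) (Suc j) (lift i s)"
  by (induction t arbitrary: i j s) (auto simp: lift_lift)

lemma subst_lift [simp]: "subst (lift k t) k s = t"
  by (induction t arbitrary: k s) (auto simp: map_idI)

lemma subst_subst:
  "i \<le> j \<Longrightarrow> subst (subst t (Suc j) (lift i v)) i (subst u j v) = subst (subst t i u) j v"
  by (induction t arbitrary: i j u v) (auto simp: lift_lift [symmetric] lift_subst_lt)

lemma is_value_lift [simp]: "is_value (lift k t) = is_value t"
  by (cases t) auto

lemma is_value_subst: "is_value t \<Longrightarrow> is_value s \<Longrightarrow> is_value (subst t k s)"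
  by (cases t) auto

lemma root_lift: "root b M M' \<Longrightarrow> root b (lift k M) (lift k M')"
  by (induction rule: root.induct) (auto simp: root.simps lift_subst [of 0, simplified])

lemma surf_lift: "surf b M M' \<Longrightarrow> surf b (lift k M) (lift k M')"
  by (induction arbitrary: k rule: surf.induct) (auto intro: surf.intros root_lift)

lemma root_subst:
  "root b M M' \<Longrightarrow> b = Beta \<or> is_value N \<Longrightarrow> root b (subst M k N) (subst M' k N)"
  by (induction rule: root.induct)
    (auto simp: root.simps subst_subst [of 0 k, simplified, symmetric] intro: is_value_subst)

lemma surf_subst:
  "surf b M M' \<Longrightarrow> b = Beta \<or> is_value N \<Longrightarrow> surf b (subst M k N) (subst M' k N)"
  by (induction arbitrary: k N rule: surf.induct) (auto intro: surf.intros root_subst)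

lemma surf_step: "surf b M M' \<Longrightarrow> step b M M'"
  by (induction rule: surf.induct) (auto intro: step.intros)

lemma surfs_subst:
  "(surf b)\<^sup>*\<^sup>* M M' \<Longrightarrow> b = Beta \<or> is_value N \<Longrightarrow> (surf b)\<^sup>*\<^sup>* (subst M k N) (subst M' k N)"
  by (erule rtranclp_map [where f = "\<lambda>M. subst M k N"]) (simp add: surf_subst)

lemma surfs_Lam: "(surf Beta)\<^sup>*\<^sup>* M M' \<Longrightarrow> (surf Beta)\<^sup>*\<^sup>* (Lam M) (Lam M')"
  by (erule rtranclp_map [where f = Lam]) (rule surf.s_lam)

lemma surfs_AppL: "(surf b)\<^sup>*\<^sup>* M M' \<Longrightarrow> (surf b)\<^sup>*\<^sup>* (App M N) (App M' N)"
  by (erule rtranclp_map [where f = "\<lambda>M. App M N"]) (rule surf.s_appl)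

lemma surfs_AppR: "(surf BetaV)\<^sup>*\<^sup>* N N' \<Longrightarrow> (surf BetaV)\<^sup>*\<^sup>* (App M N) (App M N')"
  by (erule rtranclp_map [where f = "App M"]) (rule surf.s_appr)

lemma steps_Lam: "(step b)\<^sup>*\<^sup>* M M' \<Longrightarrow> (step b)\<^sup>*\<^sup>* (Lam M) (Lam M')"
  by (erule rtranclp_map [where f = Lam]) (rule step.st_lam)

lemma steps_App:
  assumes "(step b)\<^sup>*\<^sup>* M M'" and "(step b)\<^sup>*\<^sup>* N N'"
  shows "(step b)\<^sup>*\<^sup>* (App M N) (App M' N')"
proof -
  have "(step b)\<^sup>*\<^sup>* (App M N) (App M' N)"
    using assms(1) by (rule rtranclp_map [where f = "\<lambda>M. App M N"]) (rule step.st_appl)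
  also have "(step b)\<^sup>*\<^sup>* (App M' N) (App M' N')"
    using assms(2) by (rule rtranclp_map [where f = "App M'"]) (rule step.st_appr)
  finally show ?thesis .
qed

lemma steps_Op_append:
  "list_all2 (step b)\<^sup>*\<^sup>* Ms Ms' \<Longrightarrow> (step b)\<^sup>*\<^sup>* (Op f (xs @ Ms)) (Op f (xs @ Ms'))"
proof (induction arbitrary: xs rule: list_all2_induct)
  case (Cons M Ms M' Ms')
  have "(step b)\<^sup>*\<^sup>* (Op f (xs @ M # Ms)) (Op f (xs @ M' # Ms))"
    using Cons(1) by (rule rtranclp_map [where f = "\<lambda>M. Op f (xs @ M # Ms)"]) (rule step.st_op)
  moreover have "(step b)\<^sup>*\<^sup>* (Op f ((xs @ [M']) @ Ms)) (Op f ((xs @ [M']) @ Ms'))"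
    by (rule Cons.IH)
  ultimately show ?case by simp
qed simp

lemma steps_Op: "list_all2 (step b)\<^sup>*\<^sup>* Ms Ms' \<Longrightarrow> (step b)\<^sup>*\<^sup>* (Op f Ms) (Op f Ms')"
  using steps_Op_append [where xs = "[]"] by simp

section \<open>Surface factorization\<close>

inductive par :: "calculus \<Rightarrow> 'o trm \<Rightarrow> 'o trm \<Rightarrow> bool" for b where
  p_var: "par b (Var i) (Var i)"
| p_lam: "par b M M' \<Longrightarrow> par b (Lam M) (Lam M')"
| p_app: "par b M M' \<Longrightarrow> par b N N' \<Longrightarrow> par b (App M N) (App M' N')"
| p_op: "list_all2 (par b) Ms Ms' \<Longrightarrow> par b (Op f Ms) (Op f Ms')"
| p_beta: "par b M M' \<Longrightarrow> par b N N' \<Longrightarrow> b = Beta \<or> is_value N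
           \<Longrightarrow> par b (App (Lam M) N) (subst M' 0 N')"

text \<open>Internal parallel reduction: parallel reduction contracting no redex in surface position,
  i.e. in a head context for \<open>Beta\<close> and in a weak context for \<open>BetaV\<close>.\<close>

inductive ipar :: "calculus \<Rightarrow> 'o trm \<Rightarrow> 'o trm \<Rightarrow> bool" where
  i_var: "ipar b (Var i) (Var i)"
| i_lam_Beta: "ipar Beta M M' \<Longrightarrow> ipar Beta (Lam M) (Lam M')"
| i_lam_BetaV: "par BetaV M M' \<Longrightarrow> ipar BetaV (Lam M) (Lam M')"
| i_app_Beta: "ipar Beta M M' \<Longrightarrow> par Beta N N' \<Longrightarrow> ipar Beta (App M N) (App M' N')"
| i_app_BetaV: "ipar BetaV M M' \<Longrightarrow> ipar BetaV N N' \<Longrightarrow> ipar BetaV (App M N) (App M' N')"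
| i_op: "list_all2 (par b) Ms Ms' \<Longrightarrow> ipar b (Op f Ms) (Op f Ms')"

inductive_cases ipar_LamE: "ipar b L (Lam K)"
inductive_cases ipar_AppE: "ipar b L (App K1 K2)"
inductive_cases ipar_Lam_leftE: "ipar b (Lam P) K"

lemma par_refl: "par b M M"
  by (induction M) (auto intro: par.intros list.rel_refl_strong)

lemma ipar_par: "ipar b M M' \<Longrightarrow> par b M M'"
  by (induction rule: ipar.induct) (auto intro: par.intros)

lemma ipar_is_value: "ipar b L K \<Longrightarrow> is_value K \<longleftrightarrow> is_value L"
  by (cases rule: ipar.cases) auto

lemma step_par: "step b M M' \<Longrightarrow> par b M M'"
proof (induction rule: step.induct)
  case (st_root b M M')
  then show ?case by (cases rule: root.cases) (auto intro!: par.intros par_refl)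
next
  case (st_op b M M' f xs ys)
  then show ?case by (auto intro!: par.intros list_all2_appendI list.rel_refl_strong par_refl)
qed (auto intro: par.intros par_refl)

lemma par_value: "par b N N' \<Longrightarrow> is_value N \<Longrightarrow> is_value N'"
  by (cases rule: par.cases) auto

lemma par_steps: "par b M M' \<Longrightarrow> (step b)\<^sup>*\<^sup>* M M'"
proof (induction rule: par.induct)
  case (p_op Ms Ms' f)
  then show ?case by (auto intro!: steps_Op elim!: list_all2_mono)
next
  case (p_beta M M' N N')
  have "(step b)\<^sup>*\<^sup>* (App (Lam M) N) (App (Lam M') N')"
    using p_beta by (auto intro: steps_App steps_Lam)
  moreover have "step b (App (Lam M') N') (subst M' 0 N')"
    using p_beta(3) par_value [OF p_beta(2)] by (cases b) (auto intro!: step.intros root.intros)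
  ultimately show ?case by auto
qed (auto intro: steps_Lam steps_App)

lemma par_lift: "par b M M' \<Longrightarrow> par b (lift k M) (lift k M')"
proof (induction arbitrary: k rule: par.induct)
  case (p_op Ms Ms' f)
  then show ?case by (auto intro!: par.intros simp: list.rel_map elim!: list_all2_mono)
next
  case (p_beta M M' N N')
  then show ?case
    using par.p_beta [of b "lift (Suc k) M" "lift (Suc k) M'" "lift k N" "lift k N'"] by auto
qed (auto intro: par.intros)

lemma par_subst:
  "par b M M' \<Longrightarrow> par b N N' \<Longrightarrow> b = Beta \<or> is_value N \<Longrightarrow> par b (subst M k N) (subst M' k N')"
proof (induction arbitrary: k N N' rule: par.induct)
  case (p_op Ms Ms' f)
  then show ?case by (auto intro!: par.intros simp: list.rel_map elim!: list_all2_mono)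
next
  case (p_beta M M' Q Q' k N N')
  have "par b (App (Lam (subst M (Suc k) (lift 0 N))) (subst Q k N))
      (subst (subst M' (Suc k) (lift 0 N')) 0 (subst Q' k N'))"
    using p_beta by (intro par.p_beta p_beta.IH par_lift) (auto intro: is_value_subst)
  then show ?case by (simp add: subst_subst [of 0 k, simplified])
qed (auto simp: par.intros par_lift)

lemma ipar_lift: "ipar b M M' \<Longrightarrow> ipar b (lift k M) (lift k M')"
proof (induction arbitrary: k rule: ipar.induct)
  case (i_op b Ms Ms' f)
  then show ?case
    by (auto intro!: ipar.intros simp: list.rel_map elim!: list_all2_mono intro: par_lift)
qed (auto intro: ipar.intros par_lift)

lemma surfs_ipar_lift:
  "((surf b)\<^sup>*\<^sup>* OO ipar b) N N' \<Longrightarrow> ((surf b)\<^sup>*\<^sup>* OO ipar b) (lift k N) (lift k N')"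
  by (elim relcomppE) (blast intro: rtranclp_map [where f = "lift k"] surf_lift ipar_lift)

lemma ipar_surfs_ipar: "ipar b M M' \<Longrightarrow> ((surf b)\<^sup>*\<^sup>* OO ipar b) M M'"
  by (rule relcomppI [where b = M]) auto

lemma surfs_ipar_Lam:
  assumes "((surf b)\<^sup>*\<^sup>* OO ipar b) M M'" and "par b M M'"
  shows "((surf b)\<^sup>*\<^sup>* OO ipar b) (Lam M) (Lam M')"
proof (cases b)
  case Beta
  from assms(1) obtain Z where "(surf b)\<^sup>*\<^sup>* M Z" and "ipar b Z M'"
    by blast
  with Beta show ?thesis by (auto intro!: relcomppI [where b = "Lam Z"] surfs_Lam ipar.intros)
next
  case BetaV
  with assms(2) show ?thesis by (auto intro: ipar_surfs_ipar ipar.intros)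
qed

lemma surfs_ipar_App_Beta:
  assumes "((surf Beta)\<^sup>*\<^sup>* OO ipar Beta) M M'" and "par Beta N N'"
  shows "((surf Beta)\<^sup>*\<^sup>* OO ipar Beta) (App M N) (App M' N')"
proof -
  from assms obtain Z where "(surf Beta)\<^sup>*\<^sup>* M Z" and "ipar Beta Z M'"
    by blast
  with assms(2) show ?thesis
    by (auto intro!: relcomppI [where b = "App Z N"] surfs_AppL ipar.intros)
qed

lemma surfs_ipar_App_BetaV:
  assumes "((surf BetaV)\<^sup>*\<^sup>* OO ipar BetaV) M M'" and "((surf BetaV)\<^sup>*\<^sup>* OO ipar BetaV) N N'"
  shows "((surf BetaV)\<^sup>*\<^sup>* OO ipar BetaV) (App M N) (App M' N')"
proof -
  from assms obtain Z W where "(surf BetaV)\<^sup>*\<^sup>* M Z" "ipar BetaV Z M'"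
    and "(surf BetaV)\<^sup>*\<^sup>* N W" "ipar BetaV W N'"
    by blast
  then show ?thesis
    by (auto intro!: relcomppI [where b = "App Z W"] ipar.intros
        intro: rtranclp_trans [OF surfs_AppL surfs_AppR])
qed

lemma surfs_ipar_subst:
  assumes "ipar b L L'" and "par b N N'" and "b = Beta \<or> is_value N"
    and "((surf b)\<^sup>*\<^sup>* OO ipar b) N N'"
  shows "((surf b)\<^sup>*\<^sup>* OO ipar b) (subst L k N) (subst L' k N')"
  using assms
proof (induction arbitrary: k N N' rule: ipar.induct)
  case (i_lam_Beta M M')
  then show ?case
    by (simp add: surfs_ipar_Lam surfs_ipar_lift par_lift par_subst ipar_par)
next
  case (i_app_Beta M M' P P')
  then show ?case by (simp add: surfs_ipar_App_Beta par_subst)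
next
  case (i_app_BetaV M M' P P')
  then show ?case by (simp add: surfs_ipar_App_BetaV)
qed (auto intro!: ipar_surfs_ipar ipar.intros par_subst par_lift
      simp: list.rel_map elim!: list_all2_mono)

lemma par_factor: "par b M M' \<Longrightarrow> ((surf b)\<^sup>*\<^sup>* OO ipar b) M M'"
proof (induction rule: par.induct)
  case (p_lam M M')
  then show ?case by (simp add: surfs_ipar_Lam)
next
  case (p_app M M' N N')
  show ?case
  proof (cases b)
    case Beta
    with p_app show ?thesis by (simp add: surfs_ipar_App_Beta)
  next
    case BetaV
    with p_app show ?thesis by (simp add: surfs_ipar_App_BetaV)
  qed
next
  case (p_beta M M' N N')
  have "surf b (App (Lam M) N) (subst M 0 N)"
    using p_beta(3) by (cases b) (auto intro: surf.s_root root.intros)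
  moreover from p_beta obtain Z where "(surf b)\<^sup>*\<^sup>* M Z" and "ipar b Z M'"
    by blast
  moreover from this have "(surf b)\<^sup>*\<^sup>* (subst M 0 N) (subst Z 0 N)"
    and "((surf b)\<^sup>*\<^sup>* OO ipar b) (subst Z 0 N) (subst M' 0 N')"
    using p_beta by (auto intro: surfs_subst surfs_ipar_subst)
  ultimately show ?case
    by (blast intro: converse_rtranclp_into_rtranclp rtranclp_trans)
qed (auto intro!: ipar_surfs_ipar ipar.intros elim!: list_all2_mono)

lemma ipar_surf_par:
  assumes "ipar b L K" and "surf b K K'"
  shows "par b L K'"
  using assms(2,1)
proof (induction arbitrary: L rule: surf.induct)
  case (s_root b M M')
  then show ?case
  proof (cases rule: root.cases)
    case (beta P Q)
    with s_root.prems show ?thesis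
      by (auto elim!: ipar_AppE ipar_LamE intro!: par.p_beta dest: ipar_par)
  next
    case (betav Q P)
    with s_root.prems show ?thesis
      by (auto elim!: ipar_AppE ipar_LamE intro!: par.p_beta dest: ipar_par ipar_is_value)
  qed
qed (auto elim!: ipar_AppE ipar_LamE intro!: par.intros dest: ipar_par)

lemma ipar_surfs_commute:
  "(surf b)\<^sup>*\<^sup>* K K' \<Longrightarrow> ipar b L K \<Longrightarrow> ((surf b)\<^sup>*\<^sup>* OO ipar b) L K'"
proof (induction arbitrary: L rule: rtranclp_induct)
  case base
  then show ?case by (rule ipar_surfs_ipar)
next
  case (step K1 K2)
  then obtain L1 where "(surf b)\<^sup>*\<^sup>* L L1" and "ipar b L1 K1"
    by blast
  moreover from this obtain L2 where "(surf b)\<^sup>*\<^sup>* L1 L2" and "ipar b L2 K2"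
    using par_factor [OF ipar_surf_par] step.hyps(2) by blast
  ultimately show ?case by (blast intro: rtranclp_trans)
qed

lemma steps_factor: "(step b)\<^sup>*\<^sup>* M N \<Longrightarrow> ((surf b)\<^sup>*\<^sup>* OO (ipar b)\<^sup>*\<^sup>*) M N"
proof (induction rule: converse_rtranclp_induct)
  case (step M M1)
  then obtain L1 where "(surf b)\<^sup>*\<^sup>* M1 L1" and "(ipar b)\<^sup>*\<^sup>* L1 N"
    by blast
  moreover obtain L where "(surf b)\<^sup>*\<^sup>* M L" and "ipar b L M1"
    using par_factor [OF step_par] step.hyps(1) by blast
  moreover from calculation obtain L' where "(surf b)\<^sup>*\<^sup>* L L'" and "ipar b L' L1"
    using ipar_surfs_commute by blast
  ultimately show ?case
    by (blast intro: rtranclp_trans converse_rtranclp_into_rtranclp)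
qed auto

section \<open>Surface normal forms\<close>

inductive_cases surf_VarE: "surf b (Var i) X"
inductive_cases surf_LamE: "surf b (Lam P) X"
inductive_cases surf_AppE: "surf b (App P Q) X"
inductive_cases surf_OpE: "surf b (Op f Ps) X"
inductive_cases step_VarE: "step b (Var i) X"

lemma surf_normal_Var: "surf_normal b (Var i)"
  by (auto simp: surf_normal_def elim: surf_VarE root.cases)

lemma surf_normal_Lam: "surf_normal b (Lam P) \<longleftrightarrow> (b = Beta \<longrightarrow> surf_normal b P)"
  by (auto simp: surf_normal_def elim!: surf_LamE root.cases intro: surf.intros)

lemma surf_normal_App:
  "surf_normal b (App P Q) \<longleftrightarrow>
     \<not> ((\<exists>R. P = Lam R) \<and> (b = Beta \<or> is_value Q)) \<and> surf_normal b P
     \<and> (b = BetaV \<longrightarrow> surf_normal b Q)"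
  by (cases b) (auto simp: surf_normal_def elim!: surf_AppE root.cases intro: surf.intros root.intros)

lemma surf_normal_Op: "surf_normal b (Op f Ps)"
  by (auto simp: surf_normal_def elim: surf_OpE root.cases)

lemma normal_surf_normal: "normal b P \<Longrightarrow> surf_normal b P"
  by (auto simp: normal_def surf_normal_def dest: surf_step)

lemma step_to_value_surf: "step b P P' \<Longrightarrow> is_value P' \<Longrightarrow> \<not> is_value P \<Longrightarrow> surf b P P'"
  by (cases rule: step.cases) (auto intro: surf.intros)

lemma step_to_Lam: "step b P (Lam R) \<Longrightarrow> surf_normal b P \<Longrightarrow> \<exists>R'. P = Lam R'"
  by (cases P) (auto simp: surf_normal_def elim!: step_VarE root.cases dest: step_to_value_surf)

lemma surf_normal_step: "step b M M' \<Longrightarrow> surf_normal b M \<Longrightarrow> surf_normal b M'"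
proof (induction rule: step.induct)
  case (st_root b M M')
  then show ?case by (auto simp: surf_normal_def intro: surf.intros)
next
  case (st_lam b M M')
  then show ?case by (auto simp: surf_normal_Lam)
next
  case (st_appl b M M' N)
  then show ?case by (auto simp: surf_normal_App dest: step_to_Lam)
next
  case (st_appr b N N' M)
  show ?case
  proof (cases b)
    case Beta
    with st_appr.prems show ?thesis by (simp add: surf_normal_App)
  next
    case BetaV
    with st_appr show ?thesis
      by (auto simp: surf_normal_App surf_normal_def [of BetaV N] dest: step_to_value_surf)
  qed
next
  case (st_op b M M' f xs ys)
  then show ?case by (simp add: surf_normal_Op)
qed

lemma surf_normal_steps: "(step b)\<^sup>*\<^sup>* M M' \<Longrightarrow> surf_normal b M \<Longrightarrow> surf_normal b M'"
  by (induction rule: rtranclp_induct) (auto intro: surf_normal_step)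

lemma ipar_surf_normal: "ipar b L K \<Longrightarrow> surf_normal b K \<Longrightarrow> surf_normal b L"
  by (induction rule: ipar.induct)
    (auto simp: surf_normal_Var surf_normal_Lam surf_normal_App surf_normal_Op ipar_is_value
      elim: ipar_Lam_leftE)

lemma ipars_surf_normal: "(ipar b)\<^sup>*\<^sup>* L K \<Longrightarrow> surf_normal b K \<Longrightarrow> surf_normal b L"
  by (induction rule: converse_rtranclp_induct) (auto intro: ipar_surf_normal)

inductive subterm_steps :: "calculus \<Rightarrow> 'o trm \<Rightarrow> 'o trm \<Rightarrow> bool" for b where
  "subterm_steps b (Var i) (Var i)"
| "(step b)\<^sup>*\<^sup>* M M' \<Longrightarrow> subterm_steps b (Lam M) (Lam M')"
| "(step b)\<^sup>*\<^sup>* M M' \<Longrightarrow> (step b)\<^sup>*\<^sup>* N N' \<Longrightarrow> subterm_steps b (App M N) (App M' N')"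
| "list_all2 (step b)\<^sup>*\<^sup>* Ms Ms' \<Longrightarrow> subterm_steps b (Op f Ms) (Op f Ms')"

inductive_cases subterm_steps_VarE: "subterm_steps b L (Var i)"
inductive_cases subterm_steps_LamE: "subterm_steps b L (Lam N)"
inductive_cases subterm_steps_AppE: "subterm_steps b L (App N1 N2)"
inductive_cases subterm_steps_OpE: "subterm_steps b L (Op f Ns)"

lemma subterm_steps_refl: "subterm_steps b M M"
  by (cases M) (auto intro: subterm_steps.intros list.rel_refl_strong)

lemma subterm_steps_trans:
  "subterm_steps b L M \<Longrightarrow> subterm_steps b M N \<Longrightarrow> subterm_steps b L N"
  by (auto elim!: subterm_steps.cases intro!: subterm_steps.intros
      intro: rtranclp_trans list_all2_trans [OF rtranclp_trans])

lemma ipar_subterm_steps: "ipar b L K \<Longrightarrow> subterm_steps b L K"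
  by (induction rule: ipar.induct)
    (auto intro!: subterm_steps.intros intro: par_steps ipar_par elim!: list_all2_mono)

lemma ipars_subterm_steps: "(ipar b)\<^sup>*\<^sup>* L K \<Longrightarrow> subterm_steps b L K"
  by (induction rule: rtranclp_induct)
    (auto intro: subterm_steps_refl subterm_steps_trans ipar_subterm_steps)

section \<open>Parallel reduction to a normal form\<close>

lemma normal_LamD: "normal b (Lam P) \<Longrightarrow> normal b P"
  unfolding normal_def by (auto intro: step.intros)

lemma normal_AppD: "normal b (App P Q) \<Longrightarrow> normal b P \<and> normal b Q"
  unfolding normal_def by (auto intro: step.intros)

lemma normal_OpD: "normal b (Op f Ps) \<Longrightarrow> P \<in> set Ps \<Longrightarrow> normal b P"
  unfolding normal_def by (auto simp: in_set_conv_decomp intro: step.intros)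

lemma pd_normal_eq: "pd b P Q \<Longrightarrow> normal b P \<Longrightarrow> Q = P"
  by (cases rule: pd.cases) (auto dest: surf_step simp: normal_def)

lemma pd_steps: "pd b M M' \<Longrightarrow> (step b)\<^sup>*\<^sup>* M M'"
proof (induction rule: pd.induct)
  case (pd_op b f Ps Ps')
  then show ?case by (auto intro!: steps_Op elim!: list_all2_mono)
qed (auto intro: steps_Lam steps_App surf_step)

lemma pds_steps: "(pd b)\<^sup>*\<^sup>* M N \<Longrightarrow> (step b)\<^sup>*\<^sup>* M N"
  using rtranclp_mono [of "pd b" "(step b)\<^sup>*\<^sup>*"] pd_steps by auto

lemma surfs_pds: "(surf b)\<^sup>*\<^sup>* M N \<Longrightarrow> (pd b)\<^sup>*\<^sup>* M N"
  using rtranclp_mono [of "surf b" "pd b"] pd_surf by auto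

lemma surf_normal_pd: "pd b M M' \<Longrightarrow> surf_normal b M \<Longrightarrow> surf_normal b M'"
  by (blast intro: surf_normal_steps pd_steps)

lemma pd_Lam: "surf_normal b (Lam P) \<Longrightarrow> pd b P P' \<Longrightarrow> pd b (Lam P) (Lam P')"
  by (cases "normal b (Lam P)") (auto intro: pd.intros dest: normal_LamD pd_normal_eq)

lemma pd_App:
  "surf_normal b (App P Q) \<Longrightarrow> pd b P P' \<Longrightarrow> pd b Q Q' \<Longrightarrow> pd b (App P Q) (App P' Q')"
  by (cases "normal b (App P Q)") (auto intro: pd.intros dest: normal_AppD pd_normal_eq)

lemma pd_Op: "list_all2 (pd b) Ps Ps' \<Longrightarrow> pd b (Op f Ps) (Op f Ps')"
proof (cases "normal b (Op f Ps)")
  case True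
  assume "list_all2 (pd b) Ps Ps'"
  then have "list_all2 (=) Ps Ps'"
    by (rule list.rel_mono_strong) (auto dest: normal_OpD [OF True] pd_normal_eq)
  with True show ?thesis by (simp add: list.rel_eq pd_nf)
qed (auto intro: pd_op surf_normal_Op)

text \<open>A component that has reached its normal form can idle by \<open>pd_nf\<close>; this is how the
  components of a surface normal term are synchronised into steps of the whole term.\<close>

lemma pds_Lam: "(pd b)\<^sup>*\<^sup>* P P' \<Longrightarrow> surf_normal b (Lam P) \<Longrightarrow> (pd b)\<^sup>*\<^sup>* (Lam P) (Lam P')"
  unfolding rtranclp_power
  by (auto intro!: relpowp_map_invariant [where I = "\<lambda>P. surf_normal b (Lam P)"]
      intro: pd_Lam surf_normal_pd)

lemma pds_App:
  assumes "(pd b)\<^sup>*\<^sup>* P P'" "normal b P'" and "(pd b)\<^sup>*\<^sup>* Q Q'" "normal b Q'"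
    and "surf_normal b (App P Q)"
  shows "(pd b)\<^sup>*\<^sup>* (App P Q) (App P' Q')"
proof -
  have "\<forall>\<^sub>F n in sequentially. (pd b ^^ n) P P' \<and> (pd b ^^ n) Q Q'"
    using assms by (intro eventually_conj rtranclp_eventually_relpowp) (auto intro: pd_nf)
  then obtain n where "(rel_prod (pd b) (pd b) ^^ n) (P, Q) (P', Q')"
    by (auto dest: eventually_happens' [OF sequentially_bot] intro: relpowp_rel_prod)
  then have "(pd b ^^ n) (case_prod App (P, Q)) (case_prod App (P', Q'))"
    by (rule relpowp_map_invariant [where I = "\<lambda>(P, Q). surf_normal b (App P Q)"])
      (auto intro: pd_App surf_normal_pd [OF pd_App] assms(5))
  then show ?thesis by (auto intro: relpowp_imp_rtranclp)
qed

lemma pds_Op: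
  assumes "list_all2 (\<lambda>P P'. (pd b)\<^sup>*\<^sup>* P P' \<and> normal b P') Ps Ps'"
  shows "(pd b)\<^sup>*\<^sup>* (Op f Ps) (Op f Ps')"
proof -
  have "\<forall>\<^sub>F n in sequentially. list_all2 (pd b ^^ n) Ps Ps'"
    using assms by (intro eventually_list_all2)
      (auto intro: list_all2_mono rtranclp_eventually_relpowp pd_nf)
  then obtain n where "(list_all2 (pd b) ^^ n) Ps Ps'"
    by (auto dest: eventually_happens' [OF sequentially_bot] intro: list_all2_relpowp)
  then have "(pd b ^^ n) (Op f Ps) (Op f Ps')"
    by (rule relpowp_map_invariant [where I = "\<lambda>_. True"]) (auto intro: pd_Op)
  then show ?thesis by (rule relpowp_imp_rtranclp)
qed

lemma steps_normal_factor:
  assumes "(step b)\<^sup>*\<^sup>* M N" and "normal b N"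
  obtains L where "(pd b)\<^sup>*\<^sup>* M L" and "surf_normal b L" and "subterm_steps b L N"
proof -
  from steps_factor [OF assms(1)] obtain L where "(surf b)\<^sup>*\<^sup>* M L" and "(ipar b)\<^sup>*\<^sup>* L N"
    by blast
  with assms(2) show ?thesis
    by (blast intro: that surfs_pds ipars_surf_normal normal_surf_normal ipars_subterm_steps)
qed

lemma steps_normal_pds: "normal b N \<Longrightarrow> (step b)\<^sup>*\<^sup>* M N \<Longrightarrow> (pd b)\<^sup>*\<^sup>* M N"
proof (induction N arbitrary: M)
  case (Var i)
  then obtain L where "(pd b)\<^sup>*\<^sup>* M L" and "subterm_steps b L (Var i)"
    by (blast elim: steps_normal_factor)
  then show ?case by (auto elim: subterm_steps_VarE)
next
  case (Lam N)
  then obtain L where "(pd b)\<^sup>*\<^sup>* M L" and "surf_normal b L" and "subterm_steps b L (Lam N)"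
    by (blast elim: steps_normal_factor)
  moreover from this Lam have "(pd b)\<^sup>*\<^sup>* L (Lam N)"
    by (auto elim!: subterm_steps_LamE intro!: pds_Lam dest: normal_LamD)
  ultimately show ?case by (blast intro: rtranclp_trans)
next
  case (App N1 N2)
  then obtain L where "(pd b)\<^sup>*\<^sup>* M L" and "surf_normal b L" and "subterm_steps b L (App N1 N2)"
    by (blast elim: steps_normal_factor)
  moreover from this App have "(pd b)\<^sup>*\<^sup>* L (App N1 N2)"
    by (auto elim!: subterm_steps_AppE intro!: pds_App dest: normal_AppD)
  ultimately show ?case by (blast intro: rtranclp_trans)
next
  case (Op f Ns)
  then obtain L where "(pd b)\<^sup>*\<^sup>* M L" and "subterm_steps b L (Op f Ns)"
    by (blast elim: steps_normal_factor)
  moreover from this Op have "(pd b)\<^sup>*\<^sup>* L (Op f Ns)"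
    by (auto elim!: subterm_steps_OpE intro!: pds_Op elim!: list.rel_mono_strong
        dest: normal_OpD)
  ultimately show ?case by (blast intro: rtranclp_trans)
qed

theorem mainTheorem15:
  fixes b :: calculus and M N :: "'o trm"
  assumes "normal b N"
  shows "(step b)\<^sup>*\<^sup>* M N \<longleftrightarrow> (pd b)\<^sup>*\<^sup>* M N"
  using steps_normal_pds [OF assms] pds_steps by blast

end
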